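(* Let $\mathscr K$ be a quasivariety of structures, let $\mathbf F$ be a $\mathscr K$-free structure, and let $\varepsilon$ be an endomorphism of $\mathbf F$. Let $\alpha,\beta_1,\dots,\beta_m$ be atomic formulae over $\mathbf F$. If, in the lattice $\operatorname{Con}_{\mathscr K}\mathbf F$, \[ \operatorname{con}_{\mathscr K}\alpha \le \bigvee_{j=1}^m \operatorname{con}_{\mathscr K}\beta_j, \] then \[ \operatorname{con}_{\mathscr K}(\varepsilon\alpha) \le \bigvee_{j=1}^m \operatorname{con}_{\mathscr K}(\varepsilon\beta_j). \]
   Context: Structures have a signature consisting of function symbols and relation symbols with arities; homomorphisms preserve operations and map relations into relations. A congruence on a structure $\mathbf A$ is a pair $\theta=\langle\theta_0,\theta_1\rangle$ where $\theta_0$ is an equivalence relation on $A$ compatible with the operations, and $\theta_1=\bigcup_R\theta_1^R$ where for each relation symbol $R$ of arity $n$, $R^{\mathbf A}\subseteq\theta_1^R\subseteq A^n$ and $\theta_1^R$ is closed under componentwise $\theta_0$-equivalence. Quotient structures $\mathbf A/\theta$ are formed in the natural way. A quasivariety is a class of structures closed under substructures, direct products and ultraproducts (equivalently, the class of models of a set of quasi-identities $\&_{i}\alpha_i\Rightarrow\beta$ with atomic $\alpha_i,\beta$); equality is interpreted as true equality. An atomic formula over $\mathbf F$ is either $s\approx t$ with $s,t\in F$ or $R(\mathbf s)$ with $R$ a relation symbol and $\mathbf s$ a tuple of elements of $F$ of the arity of $R$. A congruence $\psi$ of $\mathbf F$ is a $\mathscr K$-congruence if $\mathbf F/\psi\in\mathscr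 K$; these form the complete lattice $\operatorname{Con}_{\mathscr K}\mathbf F$. We write $\alpha\in\psi$ if $\alpha$ is $s\approx t$ with $(s,t)\in\psi_0$, or $\alpha$ is $R(\mathbf s)$ with $\mathbf s\in\psi_1^R$. For a set $S$ of atomic formulae, $\operatorname{con}_{\mathscr K}S$ is the intersection of all congruences $\psi$ of $\mathbf F$ with $\mathbf F/\psi\in\mathscr K$ and $S\subseteq\psi$. For an endomorphism $\varepsilon$, $\varepsilon\alpha$ denotes $\varepsilon s\approx\varepsilon t$ if $\alpha$ is $s\approx t$, and $R(\varepsilon\mathbf s)$ (componentwise) if $\alpha$ is $R(\mathbf s)$. *)

theory Defs
  imports Main
begin

text \<open>A signature is given by an arity function fa for function symbols (type 'f)
  and an arity function ra for relation symbols (type 'r).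
  Operations and relations act on lists of arguments.\<close>

record ('a, 'f, 'r) struct =
  carrier :: "'a set"
  fun_of  :: "'f \<Rightarrow> 'a list \<Rightarrow> 'a"
  rel_of  :: "'r \<Rightarrow> 'a list set"

definition tuples :: "'a set \<Rightarrow> nat \<Rightarrow> 'a list set" where
  "tuples A n = {xs. length xs = n \<and> set xs \<subseteq> A}"

definition wf_struct :: "('f \<Rightarrow> nat) \<Rightarrow> ('r \<Rightarrow> nat) \<Rightarrow> ('a, 'f, 'r) struct \<Rightarrow> bool" where
  "wf_struct fa ra A \<longleftrightarrow>
     (\<forall>f. \<forall>xs \<in> tuples (carrier A) (fa f). fun_of A f xs \<in> carrier A) \<and>
     (\<forall>R. rel_of A R \<subseteq> tuples (carrier A) (ra R))"

definition hom :: "('f \<Rightarrow> nat) \<Rightarrow> ('r \<Rightarrow> nat) \<Rightarrow> ('a, 'f, 'r) struct \<Rightarrow> ('b, 'f, 'r) struct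
                   \<Rightarrow> ('a \<Rightarrow> 'b) \<Rightarrow> bool" where
  "hom fa ra A B h \<longleftrightarrow>
     h ` carrier A \<subseteq> carrier B \<and>
     (\<forall>f. \<forall>xs \<in> tuples (carrier A) (fa f). h (fun_of A f xs) = fun_of B f (map h xs)) \<and>
     (\<forall>R. \<forall>xs \<in> rel_of A R. map h xs \<in> rel_of B R)"

definition endo :: "('f \<Rightarrow> nat) \<Rightarrow> ('r \<Rightarrow> nat) \<Rightarrow> ('a, 'f, 'r) struct \<Rightarrow> ('a \<Rightarrow> 'a) \<Rightarrow> bool" where
  "endo fa ra A h \<longleftrightarrow> hom fa ra A A h"

datatype ('v, 'f) trm = Var 'v | App 'f "('v, 'f) trm list"

datatype ('v, 'f, 'r) atom = AtEq "('v, 'f) trm" "('v, 'f) trm" | AtRel 'r "('v, 'f) trm list"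

fun wf_trm :: "('f \<Rightarrow> nat) \<Rightarrow> ('v, 'f) trm \<Rightarrow> bool" where
  "wf_trm fa (Var v) = True"
| "wf_trm fa (App f ts) = (length ts = fa f \<and> (\<forall>t \<in> set ts. wf_trm fa t))"

fun wf_atom :: "('f \<Rightarrow> nat) \<Rightarrow> ('r \<Rightarrow> nat) \<Rightarrow> ('v, 'f, 'r) atom \<Rightarrow> bool" where
  "wf_atom fa ra (AtEq s t) = (wf_trm fa s \<and> wf_trm fa t)"
| "wf_atom fa ra (AtRel R ts) = (length ts = ra R \<and> (\<forall>t \<in> set ts. wf_trm fa t))"

fun eval :: "('a, 'f, 'r) struct \<Rightarrow> ('v \<Rightarrow> 'a) \<Rightarrow> ('v, 'f) trm \<Rightarrow> 'a" where
  "eval A \<sigma> (Var v) = \<sigma> v"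
| "eval A \<sigma> (App f ts) = fun_of A f (map (eval A \<sigma>) ts)"

fun holds :: "('a, 'f, 'r) struct \<Rightarrow> ('v \<Rightarrow> 'a) \<Rightarrow> ('v, 'f, 'r) atom \<Rightarrow> bool" where
  "holds A \<sigma> (AtEq s t) = (eval A \<sigma> s = eval A \<sigma> t)"
| "holds A \<sigma> (AtRel R ts) = (map (eval A \<sigma>) ts \<in> rel_of A R)"

text \<open>A quasi-identity  \<open>&_i \<alpha>_i \<Rightarrow> \<beta>\<close>  (finitely many premises, variables from nat).\<close>

type_synonym ('f, 'r) qid = "(nat, 'f, 'r) atom list \<times> (nat, 'f, 'r) atom"

definition wf_qid :: "('f \<Rightarrow> nat) \<Rightarrow> ('r \<Rightarrow> nat) \<Rightarrow> ('f, 'r) qid \<Rightarrow> bool" where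
  "wf_qid fa ra q \<longleftrightarrow> (\<forall>a \<in> set (fst q). wf_atom fa ra a) \<and> wf_atom fa ra (snd q)"

definition sat_qid :: "('a, 'f, 'r) struct \<Rightarrow> ('f, 'r) qid \<Rightarrow> bool" where
  "sat_qid A q \<longleftrightarrow>
     (\<forall>\<sigma>. range \<sigma> \<subseteq> carrier A \<longrightarrow> (\<forall>a \<in> set (fst q). holds A \<sigma> a) \<longrightarrow> holds A \<sigma> (snd q))"

text \<open>The quasivariety K determined by a set Sigma of quasi-identities: membership of a structure
  (of arbitrary carrier type) in K.\<close>

definition inK :: "('f \<Rightarrow> nat) \<Rightarrow> ('r \<Rightarrow> nat) \<Rightarrow> ('f, 'r) qid set \<Rightarrow> ('a, 'f, 'r) struct \<Rightarrow> bool" where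
  "inK fa ra \<Sigma> A \<longleftrightarrow> wf_struct fa ra A \<and> (\<forall>q \<in> \<Sigma>. sat_qid A q)"

inductive_set generated :: "('a, 'f, 'r) struct \<Rightarrow> ('f \<Rightarrow> nat) \<Rightarrow> 'a set \<Rightarrow> 'a set"
  for A fa X where
  gen_base: "x \<in> X \<Longrightarrow> x \<in> generated A fa X"
| gen_app: "length xs = fa f \<Longrightarrow> (\<forall>x \<in> set xs. x \<in> generated A fa X) \<Longrightarrow> fun_of A f xs \<in> generated A fa X"

text \<open>Target structures range over all
  carrier types 'b (the type is an explicit parameter).\<close>

definition Kfree :: "('f \<Rightarrow> nat) \<Rightarrow> ('r \<Rightarrow> nat) \<Rightarrow> ('f, 'r) qid set \<Rightarrow> ('a, 'f, 'r) struct
                      \<Rightarrow> 'b itself \<Rightarrow> bool" where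
  "Kfree fa ra \<Sigma> F (TYPE('b)) \<longleftrightarrow>
     inK fa ra \<Sigma> F \<and>
     (\<exists>X \<subseteq> carrier F. generated F fa X = carrier F \<and>
        (\<forall>(A :: ('b, 'f, 'r) struct) g. inK fa ra \<Sigma> A \<longrightarrow> g ` X \<subseteq> carrier A \<longrightarrow>
            (\<exists>h. hom fa ra F A h \<and> (\<forall>x \<in> X. h x = g x))))"

type_synonym ('a, 'r) cong = "('a \<times> 'a) set \<times> ('r \<Rightarrow> 'a list set)"

definition is_cong :: "('f \<Rightarrow> nat) \<Rightarrow> ('r \<Rightarrow> nat) \<Rightarrow> ('a, 'f, 'r) struct \<Rightarrow> ('a, 'r) cong \<Rightarrow> bool" where
  "is_cong fa ra A \<theta> \<longleftrightarrow>
     equiv (carrier A) (fst \<theta>) \<and>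
     (\<forall>f. \<forall>xs \<in> tuples (carrier A) (fa f). \<forall>ys \<in> tuples (carrier A) (fa f).
         list_all2 (\<lambda>x y. (x, y) \<in> fst \<theta>) xs ys \<longrightarrow> (fun_of A f xs, fun_of A f ys) \<in> fst \<theta>) \<and>
     (\<forall>R. rel_of A R \<subseteq> snd \<theta> R \<and> snd \<theta> R \<subseteq> tuples (carrier A) (ra R) \<and>
         (\<forall>xs ys. xs \<in> snd \<theta> R \<longrightarrow> list_all2 (\<lambda>x y. (x, y) \<in> fst \<theta>) xs ys \<longrightarrow> ys \<in> snd \<theta> R))"

definition quot :: "('a, 'f, 'r) struct \<Rightarrow> ('a, 'r) cong \<Rightarrow> ('a set, 'f, 'r) struct" where
  "quot A \<theta> =
     \<lparr> carrier = carrier A // fst \<theta>,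
       fun_of = (\<lambda>f Xs. fst \<theta> `` {fun_of A f (map (\<lambda>X. SOME x. x \<in> X) Xs)}),
       rel_of = (\<lambda>R. {map (\<lambda>x. fst \<theta> `` {x}) xs | xs. xs \<in> snd \<theta> R}) \<rparr>"

definition is_Kcong :: "('f \<Rightarrow> nat) \<Rightarrow> ('r \<Rightarrow> nat) \<Rightarrow> ('f, 'r) qid set \<Rightarrow> ('a, 'f, 'r) struct
                        \<Rightarrow> ('a, 'r) cong \<Rightarrow> bool" where
  "is_Kcong fa ra \<Sigma> A \<psi> \<longleftrightarrow> is_cong fa ra A \<psi> \<and> inK fa ra \<Sigma> (quot A \<psi>)"

definition cong_le :: "('a, 'r) cong \<Rightarrow> ('a, 'r) cong \<Rightarrow> bool" where
  "cong_le \<theta> \<psi> \<longleftrightarrow> fst \<theta> \<subseteq> fst \<psi> \<and> (\<forall>R. snd \<theta> R \<subseteq> snd \<psi> R)"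

definition cong_Inf :: "('a, 'r) cong set \<Rightarrow> ('a, 'r) cong" where
  "cong_Inf S = (\<Inter>\<psi> \<in> S. fst \<psi>, \<lambda>R. \<Inter>\<psi> \<in> S. snd \<psi> R)"

datatype ('a, 'r) afml = FEq 'a 'a | FRel 'r "'a list"

fun wf_afml :: "('r \<Rightarrow> nat) \<Rightarrow> ('a, 'f, 'r) struct \<Rightarrow> ('a, 'r) afml \<Rightarrow> bool" where
  "wf_afml ra A (FEq s t) = (s \<in> carrier A \<and> t \<in> carrier A)"
| "wf_afml ra A (FRel R ss) = (ss \<in> tuples (carrier A) (ra R))"

fun in_cong :: "('a, 'r) afml \<Rightarrow> ('a, 'r) cong \<Rightarrow> bool" where
  "in_cong (FEq s t) \<psi> = ((s, t) \<in> fst \<psi>)"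
| "in_cong (FRel R ss) \<psi> = (ss \<in> snd \<psi> R)"

fun map_afml :: "('a \<Rightarrow> 'a) \<Rightarrow> ('a, 'r) afml \<Rightarrow> ('a, 'r) afml" where
  "map_afml \<epsilon> (FEq s t) = FEq (\<epsilon> s) (\<epsilon> t)"
| "map_afml \<epsilon> (FRel R ss) = FRel R (map \<epsilon> ss)"

definition conK :: "('f \<Rightarrow> nat) \<Rightarrow> ('r \<Rightarrow> nat) \<Rightarrow> ('f, 'r) qid set \<Rightarrow> ('a, 'f, 'r) struct
                    \<Rightarrow> ('a, 'r) afml set \<Rightarrow> ('a, 'r) cong" where
  "conK fa ra \<Sigma> A S = cong_Inf {\<psi>. is_Kcong fa ra \<Sigma> A \<psi> \<and> (\<forall>\<alpha> \<in> S. in_cong \<alpha> \<psi>)}"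

definition KSup :: "('f \<Rightarrow> nat) \<Rightarrow> ('r \<Rightarrow> nat) \<Rightarrow> ('f, 'r) qid set \<Rightarrow> ('a, 'f, 'r) struct
                    \<Rightarrow> ('a, 'r) cong set \<Rightarrow> ('a, 'r) cong" where
  "KSup fa ra \<Sigma> A C = cong_Inf {\<phi>. is_Kcong fa ra \<Sigma> A \<phi> \<and> (\<forall>\<psi> \<in> C. cong_le \<psi> \<phi>)}"

end

theory Submission
  imports Defs
begin

text \<open>For a K-congruence \<open>\<phi>\<close> of F, its preimage \<open>\<epsilon>\<^sup>-\<^sup>1\<phi>\<close> under the endomorphism is
  again a K-congruence, and \<open>\<gamma> \<in> \<epsilon>\<^sup>-\<^sup>1\<phi>\<close> iff \<open>\<epsilon>\<gamma> \<in> \<phi>\<close>. So if \<open>\<phi>\<close> lies above every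
  \<open>con\<^sub>K(\<epsilon>\<beta>\<^sub>j)\<close>, then \<open>\<epsilon>\<^sup>-\<^sup>1\<phi>\<close> contains every \<open>\<beta>\<^sub>j\<close>, hence lies above their join and so
  contains \<open>\<alpha>\<close>; that is, \<open>\<epsilon>\<alpha> \<in> \<phi>\<close>. As the join of the \<open>con\<^sub>K(\<epsilon>\<beta>\<^sub>j)\<close> is the meet
  of all such \<open>\<phi>\<close>, the claim follows.\<close>

fun holds_mod :: "('a, 'f, 'r) struct \<Rightarrow> ('a, 'r) cong \<Rightarrow> ('v \<Rightarrow> 'a) \<Rightarrow> ('v, 'f, 'r) atom \<Rightarrow> bool" where
  "holds_mod A \<theta> \<rho> (AtEq s t) = ((eval A \<rho> s, eval A \<rho> t) \<in> fst \<theta>)"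
| "holds_mod A \<theta> \<rho> (AtRel R ts) = (map (eval A \<rho>) ts \<in> snd \<theta> R)"

definition rep :: "'a set \<Rightarrow> 'a" where
  "rep X = (SOME x. x \<in> X)"

lemma fun_of_quot: "fun_of (quot A \<theta>) f Xs = fst \<theta> `` {fun_of A f (map rep Xs)}"
  by (simp add: quot_def rep_def[abs_def])

lemma rel_of_quot: "rel_of (quot A \<theta>) R = {map (\<lambda>x. fst \<theta> `` {x}) xs | xs. xs \<in> snd \<theta> R}"
  by (simp add: quot_def)

lemma carrier_quot: "carrier (quot A \<theta>) = carrier A // fst \<theta>"
  by (simp add: quot_def)

lemma
  assumes "equiv A r" "X \<in> A // r"
  shows rep_in_class: "rep X \<in> X"
    and rep_in_carrier: "rep X \<in> A"
    and class_of_rep: "r `` {rep X} = X"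
proof -
  obtain x where x: "x \<in> A" "X = r `` {x}" using assms(2) by (auto elim: quotientE)
  then have "x \<in> X" using assms(1) equiv_class_self by metis
  then show "rep X \<in> X" unfolding rep_def by (rule someI)
  then show "rep X \<in> A"
    using x assms(1) by (auto simp: equiv_def refl_on_def)
  show "r `` {rep X} = X"
    using x \<open>rep X \<in> X\<close> assms(1) by (metis equiv_class_eq_iff equiv_class_self quotientI quotient_eq_iff)
qed

lemma cong_equiv: "is_cong fa ra A \<theta> \<Longrightarrow> equiv (carrier A) (fst \<theta>)"
  by (simp add: is_cong_def)

lemma cong_compatible:
  "is_cong fa ra A \<theta> \<Longrightarrow> xs \<in> tuples (carrier A) (fa f) \<Longrightarrow> ys \<in> tuples (carrier A) (fa f) \<Longrightarrow>
    list_all2 (\<lambda>x y. (x, y) \<in> fst \<theta>) xs ys \<Longrightarrow> (fun_of A f xs, fun_of A f ys) \<in> fst \<theta>"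
  by (simp add: is_cong_def)

lemma cong_rel_closed:
  "is_cong fa ra A \<theta> \<Longrightarrow> xs \<in> snd \<theta> R \<Longrightarrow> list_all2 (\<lambda>x y. (x, y) \<in> fst \<theta>) xs ys \<Longrightarrow> ys \<in> snd \<theta> R"
  by (simp add: is_cong_def)

lemma cong_rel_contains: "is_cong fa ra A \<theta> \<Longrightarrow> rel_of A R \<subseteq> snd \<theta> R"
  by (simp add: is_cong_def)

lemma cong_rel_tuples: "is_cong fa ra A \<theta> \<Longrightarrow> snd \<theta> R \<subseteq> tuples (carrier A) (ra R)"
  by (simp add: is_cong_def)

lemma map_class_eq_iff:
  assumes "equiv A r" "set xs \<subseteq> A" "set ys \<subseteq> A"
  shows "map (\<lambda>x. r `` {x}) xs = map (\<lambda>x. r `` {x}) ys \<longleftrightarrow> list_all2 (\<lambda>x y. (x, y) \<in> r) xs ys"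
  using assms(2,3)
proof (induction xs arbitrary: ys)
  case (Cons x xs)
  then show ?case by (cases ys) (auto simp: eq_equiv_class_iff[OF assms(1)])
qed auto

lemma eval_in_carrier:
  assumes "wf_struct fa ra A" "range \<rho> \<subseteq> carrier A"
  shows "wf_trm fa t \<Longrightarrow> eval A \<rho> t \<in> carrier A"
proof (induction t)
  case (App f ts)
  then have "map (eval A \<rho>) ts \<in> tuples (carrier A) (fa f)"
    by (auto simp: tuples_def)
  then show ?case using assms(1) by (auto simp: wf_struct_def)
qed (use assms in auto)

lemma eval_args_in_tuples:
  "wf_struct fa ra A \<Longrightarrow> range \<rho> \<subseteq> carrier A \<Longrightarrow> \<forall>t \<in> set ts. wf_trm fa t \<Longrightarrow> length ts = n \<Longrightarrow>
    map (eval A \<rho>) ts \<in> tuples (carrier A) n"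
  using eval_in_carrier by (fastforce simp: tuples_def)

lemma eval_hom:
  assumes h: "hom fa ra A B h" and "wf_struct fa ra A" "range \<rho> \<subseteq> carrier A"
  shows "wf_trm fa t \<Longrightarrow> eval B (h \<circ> \<rho>) t = h (eval A \<rho> t)"
proof (induction t)
  case (App f ts)
  have "map (eval A \<rho>) ts \<in> tuples (carrier A) (fa f)"
    using App.prems eval_args_in_tuples assms(2,3) by auto
  then have "h (fun_of A f (map (eval A \<rho>) ts)) = fun_of B f (map h (map (eval A \<rho>) ts))"
    using h by (simp add: hom_def)
  then show ?case using App by (simp add: comp_def cong: map_cong)
qed simp

lemma eval_respects_cong:
  assumes c: "is_cong fa ra A \<theta>" and w: "wf_struct fa ra A"
    and "range \<rho> \<subseteq> carrier A" "range \<rho>' \<subseteq> carrier A"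
    and rel: "\<forall>v. (\<rho> v, \<rho>' v) \<in> fst \<theta>"
  shows "wf_trm fa t \<Longrightarrow> (eval A \<rho> t, eval A \<rho>' t) \<in> fst \<theta>"
proof (induction t)
  case (App f ts)
  then have "list_all2 (\<lambda>x y. (x, y) \<in> fst \<theta>) (map (eval A \<rho>) ts) (map (eval A \<rho>') ts)"
    by (auto simp: list_all2_conv_all_nth)
  moreover have "map (eval A \<rho>) ts \<in> tuples (carrier A) (fa f)" "map (eval A \<rho>') ts \<in> tuples (carrier A) (fa f)"
    using App.prems eval_args_in_tuples[OF w] assms(3,4) by auto
  ultimately show ?case using cong_compatible[OF c] by simp
qed (use rel in simp)

lemma eval_quot:
  assumes c: "is_cong fa ra A \<theta>" and w: "wf_struct fa ra A"
    and \<sigma>: "range \<sigma> \<subseteq> carrier A // fst \<theta>"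
  shows "wf_trm fa t \<Longrightarrow> eval (quot A \<theta>) \<sigma> t = fst \<theta> `` {eval A (rep \<circ> \<sigma>) t}"
proof (induction t)
  case (Var v)
  then show ?case using \<sigma> class_of_rep[OF cong_equiv[OF c]] by auto
next
  case (App f ts)
  have eq: "equiv (carrier A) (fst \<theta>)" using cong_equiv[OF c] .
  have rng: "range (rep \<circ> \<sigma>) \<subseteq> carrier A" using \<sigma> rep_in_carrier[OF eq] by auto
  define es where "es = map (eval A (rep \<circ> \<sigma>)) ts"
  define ps where "ps = map (\<lambda>e. rep (fst \<theta> `` {e})) es"
  have es: "es \<in> tuples (carrier A) (fa f)"
    using App.prems eval_args_in_tuples[OF w rng] by (simp add: es_def)
  have rep_class: "rep (fst \<theta> `` {e}) \<in> carrier A \<and> fst \<theta> `` {rep (fst \<theta> `` {e})} = fst \<theta> `` {e}"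
    if "e \<in> carrier A" for e
    using that rep_in_carrier[OF eq] class_of_rep[OF eq] by (simp add: quotientI)
  have ps: "ps \<in> tuples (carrier A) (fa f)"
    using es rep_class by (auto simp: tuples_def ps_def)
  have "list_all2 (\<lambda>x y. (x, y) \<in> fst \<theta>) ps es"
    using es ps rep_class
    by (subst map_class_eq_iff[OF eq, symmetric]) (auto simp: ps_def tuples_def)
  then have "fst \<theta> `` {fun_of A f ps} = fst \<theta> `` {fun_of A f es}"
    using cong_compatible[OF c ps es] eq by (simp add: equiv_class_eq)
  moreover have "map (eval (quot A \<theta>) \<sigma>) ts = map (\<lambda>e. fst \<theta> `` {e}) es"
    using App by (simp add: es_def comp_def)
  then have "eval (quot A \<theta>) \<sigma> (App f ts) = fst \<theta> `` {fun_of A f ps}"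
    by (simp add: fun_of_quot ps_def comp_def)
  ultimately show ?case by (simp add: es_def comp_def)
qed

lemma holds_quot_iff:
  assumes c: "is_cong fa ra A \<theta>" and w: "wf_struct fa ra A"
    and \<sigma>: "range \<sigma> \<subseteq> carrier A // fst \<theta>" and a: "wf_atom fa ra a"
  shows "holds (quot A \<theta>) \<sigma> a \<longleftrightarrow> holds_mod A \<theta> (rep \<circ> \<sigma>) a"
proof -
  have eq: "equiv (carrier A) (fst \<theta>)" using cong_equiv[OF c] .
  have rng: "range (rep \<circ> \<sigma>) \<subseteq> carrier A" using \<sigma> rep_in_carrier[OF eq] by auto
  show ?thesis
  proof (cases a)
    case (AtEq s t)
    then show ?thesis
      using a eval_quot[OF c w \<sigma>] eval_in_carrier[OF w rng] by (simp add: eq_equiv_class_iff[OF eq])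
  next
    case (AtRel R ts)
    define es where "es = map (eval A (rep \<circ> \<sigma>)) ts"
    have es: "set es \<subseteq> carrier A"
      using AtRel a eval_in_carrier[OF w rng] by (auto simp: es_def)
    have rel: "map (\<lambda>x. fst \<theta> `` {x}) es \<in> rel_of (quot A \<theta>) R \<longleftrightarrow> es \<in> snd \<theta> R"
    proof
      assume "map (\<lambda>x. fst \<theta> `` {x}) es \<in> rel_of (quot A \<theta>) R"
      then obtain xs where xs: "xs \<in> snd \<theta> R" "map (\<lambda>x. fst \<theta> `` {x}) xs = map (\<lambda>x. fst \<theta> `` {x}) es"
        by (auto simp: rel_of_quot)
      moreover have "set xs \<subseteq> carrier A"
        using xs(1) cong_rel_tuples[OF c] by (auto simp: tuples_def)
      ultimately show "es \<in> snd \<theta> R"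
        using es cong_rel_closed[OF c] map_class_eq_iff[OF eq] by blast
    qed (auto simp: rel_of_quot)
    have ev: "map (eval (quot A \<theta>) \<sigma>) ts = map (\<lambda>x. fst \<theta> `` {x}) es"
      using AtRel a eval_quot[OF c w \<sigma>] by (simp add: es_def)
    show ?thesis by (simp only: AtRel holds.simps holds_mod.simps ev rel flip: es_def)
  qed
qed

lemma holds_mod_respects_cong:
  assumes c: "is_cong fa ra A \<theta>" and w: "wf_struct fa ra A"
    and r: "range \<rho> \<subseteq> carrier A" "range \<rho>' \<subseteq> carrier A"
    and rel: "\<forall>v. (\<rho> v, \<rho>' v) \<in> fst \<theta>" and a: "wf_atom fa ra a"
    and "holds_mod A \<theta> \<rho> a"
  shows "holds_mod A \<theta> \<rho>' a"
proof (cases a)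
  case (AtEq s t)
  have "equiv (carrier A) (fst \<theta>)" using cong_equiv[OF c] .
  then show ?thesis
    using AtEq a assms(7) eval_respects_cong[OF c w r rel]
    by (simp add: equiv_def) (meson symD transD)
next
  case (AtRel R ts)
  then have "list_all2 (\<lambda>x y. (x, y) \<in> fst \<theta>) (map (eval A \<rho>) ts) (map (eval A \<rho>') ts)"
    using a eval_respects_cong[OF c w r rel] by (auto simp: list_all2_conv_all_nth)
  then show ?thesis using AtRel assms(7) cong_rel_closed[OF c] by simp
qed

lemma holds_quot_classes:
  assumes c: "is_cong fa ra A \<theta>" and w: "wf_struct fa ra A"
    and \<rho>: "range \<rho> \<subseteq> carrier A" and a: "wf_atom fa ra a"
  shows "holds (quot A \<theta>) (\<lambda>v. fst \<theta> `` {\<rho> v}) a \<longleftrightarrow> holds_mod A \<theta> \<rho> a"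
proof -
  have eq: "equiv (carrier A) (fst \<theta>)" using cong_equiv[OF c] .
  let ?\<sigma> = "\<lambda>v. fst \<theta> `` {\<rho> v}"
  have \<sigma>: "range ?\<sigma> \<subseteq> carrier A // fst \<theta>" using \<rho> by (auto intro: quotientI)
  then have rep: "range (rep \<circ> ?\<sigma>) \<subseteq> carrier A" using rep_in_carrier[OF eq] by auto
  have "(\<rho> v, rep (?\<sigma> v)) \<in> fst \<theta>" for v
    using \<sigma> rep_in_class[OF eq] by auto
  then have "(\<rho> v, (rep \<circ> ?\<sigma>) v) \<in> fst \<theta>" "((rep \<circ> ?\<sigma>) v, \<rho> v) \<in> fst \<theta>" for v
    using eq by (auto simp: equiv_def dest: symD)
  then show ?thesis
    using holds_quot_iff[OF c w \<sigma> a] holds_mod_respects_cong[OF c w \<rho> rep _ a]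
      holds_mod_respects_cong[OF c w rep \<rho> _ a] by blast
qed

lemma sat_qid_quot_iff:
  assumes c: "is_cong fa ra A \<theta>" and w: "wf_struct fa ra A" and q: "wf_qid fa ra q"
  shows "sat_qid (quot A \<theta>) q \<longleftrightarrow>
    (\<forall>\<rho>. range \<rho> \<subseteq> carrier A \<longrightarrow> (\<forall>a \<in> set (fst q). holds_mod A \<theta> \<rho> a) \<longrightarrow> holds_mod A \<theta> \<rho> (snd q))"
    (is "_ \<longleftrightarrow> (\<forall>\<rho>. ?sat \<rho>)")
proof
  assume sat: "sat_qid (quot A \<theta>) q"
  show "\<forall>\<rho>. ?sat \<rho>"
  proof (intro allI impI)
    fix \<rho> :: "nat \<Rightarrow> _"
    assume \<rho>: "range \<rho> \<subseteq> carrier A" and prems: "\<forall>a \<in> set (fst q). holds_mod A \<theta> \<rho> a"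
    let ?\<sigma> = "\<lambda>v. fst \<theta> `` {\<rho> v}"
    have "range ?\<sigma> \<subseteq> carrier (quot A \<theta>)"
      using \<rho> by (auto simp: carrier_quot intro: quotientI)
    moreover have "\<forall>a \<in> set (fst q). holds (quot A \<theta>) ?\<sigma> a"
      using prems q holds_quot_classes[OF c w \<rho>] by (simp add: wf_qid_def)
    ultimately have "holds (quot A \<theta>) ?\<sigma> (snd q)"
      using sat unfolding sat_qid_def by blast
    then show "holds_mod A \<theta> \<rho> (snd q)"
      using q holds_quot_classes[OF c w \<rho>] by (simp add: wf_qid_def)
  qed
next
  assume mod: "\<forall>\<rho>. ?sat \<rho>"
  have eq: "equiv (carrier A) (fst \<theta>)" using cong_equiv[OF c] .
  show "sat_qid (quot A \<theta>) q" unfolding sat_qid_def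
  proof (intro allI impI)
    fix \<sigma> :: "nat \<Rightarrow> _"
    assume "range \<sigma> \<subseteq> carrier (quot A \<theta>)" and prems: "\<forall>a \<in> set (fst q). holds (quot A \<theta>) \<sigma> a"
    then have \<sigma>: "range \<sigma> \<subseteq> carrier A // fst \<theta>" by (simp add: carrier_quot)
    then have rep: "range (rep \<circ> \<sigma>) \<subseteq> carrier A" using rep_in_carrier[OF eq] by auto
    have "\<sigma> = (\<lambda>v. fst \<theta> `` {(rep \<circ> \<sigma>) v})"
      using \<sigma> class_of_rep[OF eq] by fastforce
    then have "holds (quot A \<theta>) \<sigma> a \<longleftrightarrow> holds_mod A \<theta> (rep \<circ> \<sigma>) a" if "wf_atom fa ra a" for a
      using holds_quot_classes[OF c w rep that] by simp
    with mod prems rep q show "holds (quot A \<theta>) \<sigma> (snd q)" by (auto simp: wf_qid_def)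
  qed
qed

lemma wf_struct_quot:
  assumes c: "is_cong fa ra A \<theta>"
  shows "wf_struct fa ra (quot A \<theta>)"
proof -
  have eq: "equiv (carrier A) (fst \<theta>)" using cong_equiv[OF c] .
  have "fun_of (quot A \<theta>) f Xs \<in> carrier (quot A \<theta>)"
    if Xs: "Xs \<in> tuples (carrier (quot A \<theta>)) (fa f)" for f Xs
  proof -
    have reps: "map rep Xs \<in> tuples (carrier A) (fa f)"
      using Xs rep_in_carrier[OF eq] by (auto simp: tuples_def carrier_quot)
    then have "list_all2 (\<lambda>x y. (x, y) \<in> fst \<theta>) (map rep Xs) (map rep Xs)"
      using eq by (intro list.rel_refl_strong) (auto simp: tuples_def equiv_def refl_on_def)
    then have "(fun_of A f (map rep Xs), fun_of A f (map rep Xs)) \<in> fst \<theta>"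
      using cong_compatible[OF c reps reps] by blast
    then have "fun_of A f (map rep Xs) \<in> carrier A"
      using eq by (auto simp: equiv_def refl_on_def)
    then show ?thesis by (simp add: fun_of_quot carrier_quot quotientI)
  qed
  moreover have "rel_of (quot A \<theta>) R \<subseteq> tuples (carrier (quot A \<theta>)) (ra R)" for R
    using cong_rel_tuples[OF c, of R]
    by (fastforce simp: rel_of_quot tuples_def carrier_quot intro: quotientI)
  ultimately show ?thesis by (simp add: wf_struct_def)
qed

definition cong_pullback :: "('a, 'f, 'r) struct \<Rightarrow> ('r \<Rightarrow> nat) \<Rightarrow> ('a \<Rightarrow> 'b) \<Rightarrow> ('b, 'r) cong \<Rightarrow> ('a, 'r) cong" where
  "cong_pullback A ra h \<phi> =
     ({(x, y). x \<in> carrier A \<and> y \<in> carrier A \<and> (h x, h y) \<in> fst \<phi>},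
      \<lambda>R. {xs \<in> tuples (carrier A) (ra R). map h xs \<in> snd \<phi> R})"

lemma list_all2_cong_pullbackD:
  assumes "list_all2 (\<lambda>x y. (x, y) \<in> fst (cong_pullback A ra h \<phi>)) xs ys"
  shows "list_all2 (\<lambda>x y. (x, y) \<in> fst \<phi>) (map h xs) (map h ys)" and "set ys \<subseteq> carrier A"
proof -
  show "list_all2 (\<lambda>x y. (x, y) \<in> fst \<phi>) (map h xs) (map h ys)"
    using assms by (auto simp: cong_pullback_def list_all2_map1 list_all2_map2 elim: list_all2_mono)
  show "set ys \<subseteq> carrier A"
    using assms by (auto simp: cong_pullback_def list_all2_conv_all_nth in_set_conv_nth)
qed

lemma is_cong_pullback:
  assumes w: "wf_struct fa ra A" and h: "hom fa ra A B h" and c: "is_cong fa ra B \<phi>"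
  shows "is_cong fa ra A (cong_pullback A ra h \<phi>)"
proof -
  let ?\<pi> = "cong_pullback A ra h \<phi>"
  have eq: "equiv (carrier B) (fst \<phi>)" using cong_equiv[OF c] .
  have hA: "h x \<in> carrier B" if "x \<in> carrier A" for x using h that by (auto simp: hom_def)
  have tuples_map: "map h xs \<in> tuples (carrier B) n" if "xs \<in> tuples (carrier A) n" for xs n
    using that hA by (auto simp: tuples_def)
  have "equiv (carrier A) (fst ?\<pi>)"
  proof (rule equivI)
    have refl: "refl_on (carrier B) (fst \<phi>)" and sym: "sym (fst \<phi>)" and trans: "trans (fst \<phi>)"
      using eq by (simp_all add: equiv_def)
    show "refl_on (carrier A) (fst ?\<pi>)"
      using refl hA by (auto simp: refl_on_def cong_pullback_def)
    show "sym (fst ?\<pi>)"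
      using sym by (auto simp: cong_pullback_def intro!: symI dest: symD)
    show "trans (fst ?\<pi>)"
      using trans by (auto simp: cong_pullback_def intro!: transI dest: transD)
  qed (auto simp: cong_pullback_def)
  moreover have "(fun_of A f xs, fun_of A f ys) \<in> fst ?\<pi>"
    if xs: "xs \<in> tuples (carrier A) (fa f)" and ys: "ys \<in> tuples (carrier A) (fa f)"
      and rel: "list_all2 (\<lambda>x y. (x, y) \<in> fst ?\<pi>) xs ys" for f xs ys
  proof -
    have "(fun_of B f (map h xs), fun_of B f (map h ys)) \<in> fst \<phi>"
      using cong_compatible[OF c tuples_map[OF xs] tuples_map[OF ys]] list_all2_cong_pullbackD(1)[OF rel] .
    moreover have "fun_of A f xs \<in> carrier A" "fun_of A f ys \<in> carrier A"
      using w xs ys by (auto simp: wf_struct_def)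
    ultimately show ?thesis using h xs ys by (simp add: hom_def cong_pullback_def)
  qed
  moreover have "rel_of A R \<subseteq> snd ?\<pi> R" for R
  proof
    fix xs assume xs: "xs \<in> rel_of A R"
    then have "map h xs \<in> rel_of B R" using h by (simp add: hom_def)
    then have "map h xs \<in> snd \<phi> R" using cong_rel_contains[OF c] by blast
    with xs show "xs \<in> snd ?\<pi> R" using w by (auto simp: wf_struct_def cong_pullback_def)
  qed
  moreover have "ys \<in> snd ?\<pi> R"
    if xs: "xs \<in> snd ?\<pi> R" and rel: "list_all2 (\<lambda>x y. (x, y) \<in> fst ?\<pi>) xs ys" for R xs ys
  proof -
    have "map h ys \<in> snd \<phi> R"
      using xs cong_rel_closed[OF c _ list_all2_cong_pullbackD(1)[OF rel]] by (simp add: cong_pullback_def)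
    moreover have "length ys = length xs" using rel by (simp add: list_all2_lengthD)
    ultimately show ?thesis
      using xs list_all2_cong_pullbackD(2)[OF rel] by (simp add: cong_pullback_def tuples_def)
  qed
  moreover have "snd ?\<pi> R \<subseteq> tuples (carrier A) (ra R)" for R
    by (auto simp: cong_pullback_def)
  ultimately show ?thesis unfolding is_cong_def by blast
qed

lemma holds_mod_cong_pullback:
  assumes w: "wf_struct fa ra A" and h: "hom fa ra A B h"
    and \<rho>: "range \<rho> \<subseteq> carrier A" and a: "wf_atom fa ra a"
  shows "holds_mod A (cong_pullback A ra h \<phi>) \<rho> a \<longleftrightarrow> holds_mod B \<phi> (h \<circ> \<rho>) a"
proof (cases a)
  case (AtEq s t)
  then show ?thesis
    using a eval_in_carrier[OF w \<rho>] eval_hom[OF h w \<rho>] by (simp add: cong_pullback_def)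
next
  case (AtRel R ts)
  then have args: "map (eval A \<rho>) ts \<in> tuples (carrier A) (ra R)"
    using a eval_args_in_tuples[OF w \<rho>] by simp
  have ev: "map (eval B (h \<circ> \<rho>)) ts = map h (map (eval A \<rho>) ts)"
    using AtRel a eval_hom[OF h w \<rho>] by simp
  show ?thesis
    by (simp only: AtRel holds_mod.simps ev) (simp add: cong_pullback_def args)
qed

text \<open>The quotient by the pullback embeds into \<open>quot B \<phi>\<close> via \<open>h\<close>, and quasi-identities
  are inherited by substructures; the argument below is this, read through \<open>holds_mod\<close>.\<close>

lemma is_Kcong_pullback:
  assumes \<Sigma>: "\<forall>q \<in> \<Sigma>. wf_qid fa ra q" and wA: "wf_struct fa ra A" and wB: "wf_struct fa ra B"
    and h: "hom fa ra A B h" and \<phi>: "is_Kcong fa ra \<Sigma> B \<phi>"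
  shows "is_Kcong fa ra \<Sigma> A (cong_pullback A ra h \<phi>)"
proof -
  let ?\<pi> = "cong_pullback A ra h \<phi>"
  have c\<phi>: "is_cong fa ra B \<phi>" using \<phi> by (simp add: is_Kcong_def)
  have c\<pi>: "is_cong fa ra A ?\<pi>" using is_cong_pullback[OF wA h c\<phi>] .
  have "sat_qid (quot A ?\<pi>) q" if q: "q \<in> \<Sigma>" for q
  proof -
    have wq: "wf_qid fa ra q" using \<Sigma> q by blast
    have sat_B: "\<forall>\<rho>. range \<rho> \<subseteq> carrier B \<longrightarrow> (\<forall>a \<in> set (fst q). holds_mod B \<phi> \<rho> a)
        \<longrightarrow> holds_mod B \<phi> \<rho> (snd q)"
      using \<phi> q sat_qid_quot_iff[OF c\<phi> wB wq] by (simp add: is_Kcong_def inK_def)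
    show ?thesis unfolding sat_qid_quot_iff[OF c\<pi> wA wq]
    proof (intro allI impI)
      fix \<rho> :: "nat \<Rightarrow> _"
      assume \<rho>: "range \<rho> \<subseteq> carrier A" and prems: "\<forall>a \<in> set (fst q). holds_mod A ?\<pi> \<rho> a"
      have "range (h \<circ> \<rho>) \<subseteq> carrier B" using \<rho> h by (auto simp: hom_def)
      moreover have "\<forall>a \<in> set (fst q). holds_mod B \<phi> (h \<circ> \<rho>) a"
        using prems wq holds_mod_cong_pullback[OF wA h \<rho>] by (simp add: wf_qid_def)
      ultimately have "holds_mod B \<phi> (h \<circ> \<rho>) (snd q)" using sat_B by blast
      then show "holds_mod A ?\<pi> \<rho> (snd q)"
        using wq holds_mod_cong_pullback[OF wA h \<rho>] by (simp add: wf_qid_def)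
    qed
  qed
  then show ?thesis using c\<pi> wf_struct_quot[OF c\<pi>] by (simp add: is_Kcong_def inK_def)
qed

lemma in_cong_pullback_iff:
  "wf_afml ra A x \<Longrightarrow> in_cong x (cong_pullback A ra h \<phi>) \<longleftrightarrow> in_cong (map_afml h x) \<phi>"
  by (cases x) (auto simp: cong_pullback_def)

lemma cong_le_Inf: "(\<And>\<phi>. \<phi> \<in> \<Phi> \<Longrightarrow> cong_le \<theta> \<phi>) \<Longrightarrow> cong_le \<theta> (cong_Inf \<Phi>)"
  unfolding cong_le_def cong_Inf_def by auto blast

lemma cong_Inf_le: "\<phi> \<in> \<Phi> \<Longrightarrow> cong_le (cong_Inf \<Phi>) \<phi>"
  by (auto simp: cong_le_def cong_Inf_def)

lemma cong_le_trans: "cong_le \<theta> \<psi> \<Longrightarrow> cong_le \<psi> \<phi> \<Longrightarrow> cong_le \<theta> \<phi>"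
  unfolding cong_le_def by blast

lemma in_cong_mono: "in_cong x \<psi> \<Longrightarrow> cong_le \<psi> \<phi> \<Longrightarrow> in_cong x \<phi>"
  by (cases x) (auto simp: cong_le_def)

lemma in_cong_conK: "in_cong x (conK fa ra \<Sigma> A {x})"
  by (cases x) (auto simp: conK_def cong_Inf_def)

lemma conK_le_iff:
  assumes "is_Kcong fa ra \<Sigma> A \<phi>"
  shows "cong_le (conK fa ra \<Sigma> A {x}) \<phi> \<longleftrightarrow> in_cong x \<phi>"
proof
  show "cong_le (conK fa ra \<Sigma> A {x}) \<phi> \<Longrightarrow> in_cong x \<phi>"
    by (rule in_cong_mono[OF in_cong_conK])
  show "in_cong x \<phi> \<Longrightarrow> cong_le (conK fa ra \<Sigma> A {x}) \<phi>"
    unfolding conK_def by (rule cong_Inf_le) (simp add: assms)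
qed

lemma le_KSupI:
  "(\<And>\<phi>. is_Kcong fa ra \<Sigma> A \<phi> \<Longrightarrow> (\<And>\<psi>. \<psi> \<in> C \<Longrightarrow> cong_le \<psi> \<phi>) \<Longrightarrow> cong_le \<theta> \<phi>)
    \<Longrightarrow> cong_le \<theta> (KSup fa ra \<Sigma> A C)"
  unfolding KSup_def by (rule cong_le_Inf) simp

lemma KSup_le: "is_Kcong fa ra \<Sigma> A \<phi> \<Longrightarrow> \<forall>\<psi> \<in> C. cong_le \<psi> \<phi> \<Longrightarrow> cong_le (KSup fa ra \<Sigma> A C) \<phi>"
  unfolding KSup_def by (rule cong_Inf_le) simp

theorem lemma3p1:
  fixes fa :: "'f \<Rightarrow> nat" and ra :: "'r \<Rightarrow> nat"
    and \<Sigma> :: "('f, 'r) qid set"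
    and F :: "('a, 'f, 'r) struct"
    and \<epsilon> :: "'a \<Rightarrow> 'a"
    and \<alpha> :: "('a, 'r) afml" and \<beta> :: "nat \<Rightarrow> ('a, 'r) afml" and m :: nat
  assumes K: "\<forall>q \<in> \<Sigma>. wf_qid fa ra q"
    and free: "Kfree fa ra \<Sigma> F TYPE('b)"
    and endo: "endo fa ra F \<epsilon>"
    and wf\<alpha>: "wf_afml ra F \<alpha>"
    and wf\<beta>: "\<forall>j \<in> {1..m}. wf_afml ra F (\<beta> j)"
    and le: "cong_le (conK fa ra \<Sigma> F {\<alpha>})
                     (KSup fa ra \<Sigma> F {conK fa ra \<Sigma> F {\<beta> j} | j. j \<in> {1..m}})"
  shows "cong_le (conK fa ra \<Sigma> F {map_afml \<epsilon> \<alpha>})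
                 (KSup fa ra \<Sigma> F {conK fa ra \<Sigma> F {map_afml \<epsilon> (\<beta> j)} | j. j \<in> {1..m}})"
proof -
  have wF: "wf_struct fa ra F" using free by (simp add: Kfree_def inK_def)
  have \<epsilon>: "hom fa ra F F \<epsilon>" using endo by (simp add: endo_def)
  show ?thesis
  proof (rule le_KSupI)
    fix \<phi> assume \<phi>: "is_Kcong fa ra \<Sigma> F \<phi>"
      and above: "\<And>\<psi>. \<psi> \<in> {conK fa ra \<Sigma> F {map_afml \<epsilon> (\<beta> j)} | j. j \<in> {1..m}} \<Longrightarrow> cong_le \<psi> \<phi>"
    let ?\<pi> = "cong_pullback F ra \<epsilon> \<phi>"
    have \<pi>: "is_Kcong fa ra \<Sigma> F ?\<pi>" using is_Kcong_pullback[OF K wF wF \<epsilon> \<phi>] .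
    have "in_cong (\<beta> j) ?\<pi>" if j: "j \<in> {1..m}" for j
    proof -
      have "cong_le (conK fa ra \<Sigma> F {map_afml \<epsilon> (\<beta> j)}) \<phi>" using above j by blast
      then have "in_cong (map_afml \<epsilon> (\<beta> j)) \<phi>" using conK_le_iff[OF \<phi>] by simp
      then show ?thesis using in_cong_pullback_iff wf\<beta> j by blast
    qed
    then have "cong_le (KSup fa ra \<Sigma> F {conK fa ra \<Sigma> F {\<beta> j} | j. j \<in> {1..m}}) ?\<pi>"
      by (auto intro!: KSup_le[OF \<pi>] simp: conK_le_iff[OF \<pi>])
    then have "cong_le (conK fa ra \<Sigma> F {\<alpha>}) ?\<pi>" by (rule cong_le_trans[OF le])
    then have "in_cong \<alpha> ?\<pi>" using conK_le_iff[OF \<pi>] by simp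
    then show "cong_le (conK fa ra \<Sigma> F {map_afml \<epsilon> \<alpha>}) \<phi>"
      using conK_le_iff[OF \<phi>] in_cong_pullback_iff[OF wf\<alpha>] by simp
  qed
qed

end
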